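(* Let $(s_n)$ be a sequence of nonnegative reals and $D\in\mathbb{N}\setminus\{0\}$ with $s_n\leq D$ for all $n$. Let $(\alpha_n)\subset\,]0,1[$, $(r_n),(v_n)\subset\mathbb{R}$, $(\gamma_n)\subset[0,\infty)$, and let ${\rm A}:\mathbb{N}\to\mathbb{N}$ be monotone with $\sum_{i=0}^{{\rm A}(k)}\alpha_i\geq k$ for all $k\in\mathbb{N}$. Let $k,n,p\in\mathbb{N}$ and assume (i) $\forall m\in[n,p]\ \big(v_m\leq\frac{1}{4(k+1)(p+1)}\ \wedge\ r_m\leq\frac{1}{4(k+1)}\big)$; (ii) $\forall m\in\mathbb{N}\ \big(\sum_{i=n}^{n+m}\gamma_i\leq\frac{1}{4(k+1)}\big)$; (iii) $\forall m\in\mathbb{N}\ \big(s_{m+1}\leq(1-\alpha_m)(s_m+v_m)+\alpha_m r_m+\gamma_m\big)$. Then $s_m\leq\frac{1}{k+1}$ for all $m\in[\sigma_1(k,n),p]$, where $\sigma_1(k,n):={\rm A}\big(n+\lceil\ln(4D(k+1))\rceil\big)+1$.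
   Context: A function $f:\mathbb{N}\to\mathbb{N}$ is monotone if $f(n)\leq f(n+1)$ for all $n$. $[a,b]$ denotes the set of natural numbers $m$ with $a\leq m\leq b$ (empty if $a>b$). *)

theory Defs
  imports Complex_Main
begin

text \<open>sigma_1(k,n) := A(n + ceil(ln(4 D (k+1)))) + 1. The ceiling is nonnegative since
  4 D (k+1) \<ge> 4 > 1 for D \<ge> 1, so converting it to nat via nat loses nothing.\<close>
definition sigma1 :: "(nat \<Rightarrow> nat) \<Rightarrow> nat \<Rightarrow> nat \<Rightarrow> nat \<Rightarrow> nat" where
  "sigma1 A D k n = A (n + nat \<lceil>ln (4 * real D * (real k + 1))\<rceil>) + 1"

end

theory Submission
  imports Defs
begin

text \<open>Put \<open>q = 1/(4(k+1))\<close>. Since \<open>r\<^sub>i \<le> q\<close> on \<open>[n,p]\<close>, the excess \<open>W\<^sub>i = max (s\<^sub>i - q) 0\<close>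
  obeys the linear recursion \<open>W\<^sub>i\<^sub>+\<^sub>1 \<le> (1 - \<alpha>\<^sub>i) W\<^sub>i + c\<^sub>i\<close> with \<open>c\<^sub>i = max v\<^sub>i 0 + \<gamma>\<^sub>i\<close> there.
  Unrolling it from \<open>n\<close> to \<open>m\<close> with \<open>1 - x \<le> exp (-x)\<close> bounds \<open>W\<^sub>m\<close> by
  \<open>exp (-(\<alpha>\<^sub>n + \<dots> + \<alpha>\<^sub>m\<^sub>-\<^sub>1)) D + (c\<^sub>n + \<dots> + c\<^sub>m\<^sub>-\<^sub>1)\<close>. For \<open>m > A (n + \<lceil>ln (4D(k+1))\<rceil>)\<close>
  the rate \<open>A\<close> makes the exponent at least \<open>ln (4D(k+1))\<close>, so the first term is at most \<open>q\<close>,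
  and hypotheses (i), (ii) bound the second by \<open>2q\<close>. Hence \<open>s\<^sub>m \<le> 4q = 1/(k+1)\<close>.\<close>

lemma positive_part_step:
  fixes s s' a v r g q :: real
  assumes "0 \<le> a" "a \<le> 1" "r \<le> q" "0 \<le> g"
    and "s' \<le> (1 - a) * (s + v) + a * r + g"
  shows "max (s' - q) 0 \<le> (1 - a) * max (s - q) 0 + (max v 0 + g)"
proof -
  have "s' - q \<le> (1 - a) * (s - q) + (1 - a) * v + a * (r - q) + g"
    using assms(5) by (simp add: algebra_simps)
  also have "a * (r - q) \<le> 0"
    using assms by (simp add: mult_nonneg_nonpos)
  also have "(1 - a) * v \<le> (1 - a) * max v 0"
    using assms by (intro mult_left_mono) auto
  also have "\<dots> \<le> max v 0"
    using assms by (intro mult_left_le_one_le) auto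
  also have "(1 - a) * (s - q) \<le> (1 - a) * max (s - q) 0"
    using assms by (intro mult_left_mono) auto
  finally show ?thesis
    using assms by (simp add: mult_nonneg_nonneg)
qed

lemma linear_recursion_unroll:
  fixes W a c :: "nat \<Rightarrow> real"
  assumes "\<And>i. n \<le> i \<Longrightarrow> i < n + j \<Longrightarrow> 0 \<le> a i \<and> a i \<le> 1"
    and "\<And>i. n \<le> i \<Longrightarrow> i < n + j \<Longrightarrow> 0 \<le> c i"
    and "\<And>i. n \<le> i \<Longrightarrow> i < n + j \<Longrightarrow> W (Suc i) \<le> (1 - a i) * W i + c i"
    and W_nonneg: "0 \<le> W n"
  shows "W (n + j) \<le> exp (- (\<Sum>i=n..<n+j. a i)) * W n + (\<Sum>i=n..<n+j. c i)"
  using assms(1-3)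
proof (induction j)
  case 0
  then show ?case by simp
next
  case (Suc j)
  let ?a = "a (n + j)" and ?E = "exp (- (\<Sum>i=n..<n+j. a i))" and ?C = "\<Sum>i=n..<n+j. c i"
  have a: "0 \<le> ?a" "?a \<le> 1" using Suc.prems(1)[of "n + j"] by auto
  have IH: "W (n + j) \<le> ?E * W n + ?C" using Suc by simp
  have C_nonneg: "0 \<le> ?C" using Suc.prems(2) by (intro sum_nonneg) auto
  have "W (n + Suc j) \<le> (1 - ?a) * W (n + j) + c (n + j)"
    using Suc.prems(3)[of "n + j"] by simp
  also have "\<dots> \<le> (1 - ?a) * (?E * W n + ?C) + c (n + j)"
    using a IH by (intro add_right_mono mult_left_mono) auto
  also have "\<dots> = (1 - ?a) * ?E * W n + (1 - ?a) * ?C + c (n + j)"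
    by (simp add: algebra_simps)
  also have "(1 - ?a) * ?C \<le> ?C"
    using a C_nonneg by (simp add: mult_left_le_one_le)
  also have "(1 - ?a) * ?E * W n \<le> exp (- ?a) * ?E * W n"
    using W_nonneg exp_ge_add_one_self[of "- ?a"] by (intro mult_right_mono) auto
  also have "exp (- ?a) * ?E = exp (- (\<Sum>i=n..<n + Suc j. a i))"
    by (simp add: exp_add[symmetric])
  finally show ?case by (simp add: add.assoc)
qed

lemma sum_lower_bound_from_rate:
  fixes \<alpha> :: "nat \<Rightarrow> real" and A :: "nat \<Rightarrow> nat"
  assumes \<alpha>_range: "\<And>i. 0 \<le> \<alpha> i \<and> \<alpha> i \<le> 1"
    and rate: "real N \<le> (\<Sum>i=0..A N. \<alpha> i)"
    and "A N < m" "n \<le> N"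
  shows "n \<le> m" and "real N - real n \<le> (\<Sum>i=n..<m. \<alpha> i)"
proof -
  have sum_le_card: "(\<Sum>i=0..<t. \<alpha> i) \<le> real t" for t
    using sum_mono[of "{0..<t}" \<alpha> "\<lambda>_. 1"] \<alpha>_range by simp
  have "(\<Sum>i=0..A N. \<alpha> i) \<le> (\<Sum>i=0..<m. \<alpha> i)"
    using \<open>A N < m\<close> \<alpha>_range by (intro sum_mono2) auto
  with rate have N_le: "real N \<le> (\<Sum>i=0..<m. \<alpha> i)" by linarith
  then show "n \<le> m"
    using sum_le_card[of m] \<open>n \<le> N\<close> by linarith
  then have "(\<Sum>i=0..<m. \<alpha> i) = (\<Sum>i=0..<n. \<alpha> i) + (\<Sum>i=n..<m. \<alpha> i)"
    by (simp add: sum.atLeastLessThan_concat)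
  then show "real N - real n \<le> (\<Sum>i=n..<m. \<alpha> i)"
    using N_le sum_le_card[of n] by linarith
qed

lemma sum_max_zero_le:
  fixes v :: "'a \<Rightarrow> real"
  assumes "\<And>i. i \<in> I \<Longrightarrow> v i \<le> b" "0 \<le> b" "card I \<le> N"
  shows "(\<Sum>i\<in>I. max (v i) 0) \<le> real N * b"
proof -
  have "(\<Sum>i\<in>I. max (v i) 0) \<le> real (card I) * b"
    using sum_bounded_above[of I "\<lambda>i. max (v i) 0" b] assms(1,2) by auto
  also have "\<dots> \<le> real N * b"
    using assms(2,3) by (intro mult_right_mono) auto
  finally show ?thesis .
qed

lemma sum_atLeastLessThan_le_of_partial_sums:
  fixes \<gamma> :: "nat \<Rightarrow> real"
  assumes "\<And>j. (\<Sum>i=n..n+j. \<gamma> i) \<le> b" "0 \<le> b"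
  shows "(\<Sum>i=n..<m. \<gamma> i) \<le> b"
proof (cases "n < m")
  case True
  then have "{n..<m} = {n..n + (m - n - 1)}" by auto
  then show ?thesis using assms(1) by simp
qed (use assms(2) in simp)

lemma exp_neg_le_inverse:
  fixes x y :: real
  assumes "0 < y" "ln y \<le> x"
  shows "exp (- x) \<le> 1 / y"
proof -
  have "exp (- x) \<le> exp (- ln y)" using assms(2) by simp
  also have "\<dots> = 1 / y" using assms(1) by (simp add: exp_minus divide_inverse)
  finally show ?thesis .
qed

theorem mainTheorem5:
  fixes s alpha r v gamma :: "nat \<Rightarrow> real"
    and A :: "nat \<Rightarrow> nat" and D k n p :: nat
  assumes s_nonneg: "\<And>m. s m \<ge> 0"
    and D_pos: "D \<noteq> 0"
    and s_le_D: "\<And>m. s m \<le> real D"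
    and alpha_range: "\<And>m. 0 < alpha m \<and> alpha m < 1"
    and gamma_nonneg: "\<And>m. gamma m \<ge> 0"
    and A_mono: "\<And>m. A m \<le> A (Suc m)"
    and A_rate: "\<And>j. (\<Sum>i=0..A j. alpha i) \<ge> real j"
    and hi: "\<And>m. n \<le> m \<Longrightarrow> m \<le> p \<Longrightarrow>
               v m \<le> 1 / (4 * (real k + 1) * (real p + 1)) \<and> r m \<le> 1 / (4 * (real k + 1))"
    and hii: "\<And>m. (\<Sum>i=n..n+m. gamma i) \<le> 1 / (4 * (real k + 1))"
    and hiii: "\<And>m. s (m + 1) \<le> (1 - alpha m) * (s m + v m) + alpha m * r m + gamma m"
  shows "\<forall>m. sigma1 A D k n \<le> m \<and> m \<le> p \<longrightarrow> s m \<le> 1 / (real k + 1)"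
proof (intro allI impI)
  fix m assume m: "sigma1 A D k n \<le> m \<and> m \<le> p"
  define q where "q = 1 / (4 * (real k + 1))"
  define L where "L = ln (4 * real D * (real k + 1))"
  define W where "W i = max (s i - q) 0" for i
  define S where "S = (\<Sum>i=n..<m. alpha i)"
  have q_pos: "0 < q" by (simp add: q_def)
  have alpha01: "0 \<le> alpha i \<and> alpha i \<le> 1" for i using alpha_range[of i] by auto
  have A_lt: "A (n + nat \<lceil>L\<rceil>) < m" using m by (simp add: sigma1_def L_def)
  have "n \<le> m" using sum_lower_bound_from_rate(1)[of alpha _ A _ n, OF alpha01 A_rate A_lt] by simp
  have "L \<le> S"
    using sum_lower_bound_from_rate(2)[of alpha _ A _ n, OF alpha01 A_rate A_lt] unfolding S_def by linarith
  have unrolled: "W m \<le> exp (- S) * W n + (\<Sum>i=n..<m. max (v i) 0 + gamma i)"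
    using linear_recursion_unroll[of n "m - n" alpha "\<lambda>i. max (v i) 0 + gamma i" W]
      positive_part_step[OF _ _ _ gamma_nonneg hiii] hi alpha01 gamma_nonneg m \<open>n \<le> m\<close>
    by (auto simp: W_def S_def q_def add_nonneg_nonneg)
  have "exp (- S) * W n \<le> 1 / (4 * real D * (real k + 1)) * real D"
    using exp_neg_le_inverse[OF _ \<open>L \<le> S\<close>[unfolded L_def]] D_pos s_le_D[of n] q_pos
    by (intro mult_mono) (auto simp: W_def)
  then have initial: "exp (- S) * W n \<le> q" using D_pos by (simp add: q_def)
  have "(\<Sum>i=n..<m. max (v i) 0) \<le> real (p + 1) * (q / (real p + 1))"
    using sum_max_zero_le[of "{n..<m}" v "q / (real p + 1)" "p + 1"] hi m q_pos
    by (auto simp: q_def)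
  then have "(\<Sum>i=n..<m. max (v i) 0) \<le> q" by (simp add: add.commute)
  then have "(\<Sum>i=n..<m. max (v i) 0 + gamma i) \<le> 2 * q"
    using sum_atLeastLessThan_le_of_partial_sums[OF hii, of m] q_pos
    by (simp add: sum.distrib q_def)
  with unrolled initial have "W m \<le> 3 * q" by linarith
  then have "s m \<le> 4 * q" by (simp add: W_def)
  also have "4 * q = 1 / (real k + 1)" by (simp add: q_def divide_simps)
  finally show "s m \<le> 1 / (real k + 1)" .
qed

end
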